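(* Let $P=\sum_{k=0}^nq^kP_k(D)\in\mathbb{C}[q][D]$ with $P_k\in\mathbb{C}[D]$, where $D=q\frac{d}{dq}$. Fix $N\geq0$, let $R=\mathbb{C}[\varepsilon]/(\varepsilon^{N+1})$, and let $\{\overline{c}_i\}_{i\geq0}$ be a sequence of elements of $R$. Then $\{\overline{c}_i\}$ is a Newton solution of $P_\varepsilon$ if and only if the series $I=\sum_{i\geq0}\overline{c}_iq^i\in\mathbb{C}[[q]]\otimes R$ is a perturbed solution of $P$, where $\varepsilon$ plays the role of $h$.
   Context: Newton solution. Put $P_\varepsilon=\sum_kq^kP_k(D+\varepsilon)$. A sequence $\{\overline{c}_i\}_{i\geq 0}$ in $R$ is a Newton solution of $P_\varepsilon$ if for every $m\in\mathbb{Z}$ $$\overline{c}_mP_n(m+\varepsilon)+\overline{c}_{m+1}P_{n-1}(m+1+\varepsilon)+\cdots+\overline{c}_{m+n}P_0(m+n+\varepsilon)=0,$$ with $\overline{c}_i=0$ for $i<0$. Perturbed solution. Write $I=\sum_{j=0}^NI^j(q)\varepsilon^j$ with $I^j\in\mathbb{C}[[q]]$, and put $I_r=\sum_{m=0}^rI^{r-m}(q)\,t^m/m!\in\mathbb{C}[[q]][t]$. Here $P$ acts on $\mathbb{C}[[q]][t]$ via $D(f(q)t^m)=qf'(q)t^m+mf(q)t^{m-1}$, with $q$ acting by multiplication. Then $I$ is a perturbed solution of $P$ if $PI_r=0$ for all $0\leq r\leq N$. *)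

theory Defs
  imports "HOL-Computational_Algebra.Computational_Algebra"
begin

text \<open>Elements of R = C[eps]/(eps^(N+1)) are represented by complex polynomials in eps;
  an element is zero in R iff its coefficients of eps^0, ..., eps^N vanish.\<close>
definition zero_in_R :: "nat \<Rightarrow> complex poly \<Rightarrow> bool" where
  "zero_in_R N p \<longleftrightarrow> (\<forall>j\<le>N. coeff p j = 0)"

definition ext_seq :: "(nat \<Rightarrow> complex poly) \<Rightarrow> int \<Rightarrow> complex poly" where
  "ext_seq c i = (if i < 0 then 0 else c (nat i))"

text \<open>The operator P = sum_{k=0}^n q^k P_k(D) is given by n and Pk.
  Newton solution of P_eps: for every integer m,
  sum_{j=0}^n c_{m+j} P_{n-j}(m+j+eps) = 0 in R.\<close>
definition newton_solution ::
  "nat \<Rightarrow> (nat \<Rightarrow> complex poly) \<Rightarrow> nat \<Rightarrow> (nat \<Rightarrow> complex poly) \<Rightarrow> bool" where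
  "newton_solution n Pk N c \<longleftrightarrow>
     (\<forall>m::int. zero_in_R N
        (\<Sum>j\<le>n. ext_seq c (m + int j) * pcompose (Pk (n - j)) [:of_int (m + int j), 1:]))"

text \<open>C[[q]][t] is represented as polynomials in t with formal power series coefficients.
  D(f t^m) = q f' t^m + m f t^(m-1).\<close>
definition Dop :: "complex fps poly \<Rightarrow> complex fps poly" where
  "Dop g = map_poly (\<lambda>f. fps_X * fps_deriv f) g + pderiv g"

definition poly_D :: "complex poly \<Rightarrow> complex fps poly \<Rightarrow> complex fps poly" where
  "poly_D Q g = (\<Sum>i\<le>degree Q. smult (fps_const (coeff Q i)) ((Dop ^^ i) g))"

definition apply_P :: "nat \<Rightarrow> (nat \<Rightarrow> complex poly) \<Rightarrow> complex fps poly \<Rightarrow> complex fps poly" where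
  "apply_P n Pk g = (\<Sum>k\<le>n. smult (fps_X ^ k) (poly_D (Pk k) g))"

text \<open>I = sum_i c_i q^i = sum_j I^j(q) eps^j, so I^j(q) = sum_i (coeff of eps^j in c_i) q^i.\<close>
definition I_comp :: "(nat \<Rightarrow> complex poly) \<Rightarrow> nat \<Rightarrow> complex fps" where
  "I_comp c j = Abs_fps (\<lambda>i. coeff (c i) j)"

definition I_r :: "(nat \<Rightarrow> complex poly) \<Rightarrow> nat \<Rightarrow> complex fps poly" where
  "I_r c r = (\<Sum>m\<le>r. monom (fps_const (1 / of_nat (fact m)) * I_comp c (r - m)) m)"

definition perturbed_solution ::
  "nat \<Rightarrow> (nat \<Rightarrow> complex poly) \<Rightarrow> nat \<Rightarrow> (nat \<Rightarrow> complex poly) \<Rightarrow> bool" where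
  "perturbed_solution n Pk N c \<longleftrightarrow> (\<forall>r\<le>N. apply_P n Pk (I_r c r) = 0)"

end

theory Submission
  imports Defs
begin

text \<open>The map \<open>c \<mapsto> I_r c r\<close> is linear and converts \<open>P\<^sub>\<epsilon>\<close> into \<open>P\<close>: multiplying by \<open>q^k\<close>
  shifts the sequence \<open>c\<close>, and \<open>D\<close> acts on \<open>I_r c r\<close> as multiplication of each \<open>c i\<close> by
  \<open>i + \<epsilon>\<close>, since \<open>D\<close> sends \<open>t^m / m!\<close> to \<open>t^(m-1) / (m-1)!\<close>, trading one power of \<open>t\<close> for
  one power of \<open>\<epsilon>\<close>. Hence \<open>P (I_r c r) = I_r b r\<close>, where \<open>b i\<close> is the \<open>q^i\<close>-coefficient of
  \<open>P\<^sub>\<epsilon> I\<close>, which is the Newton expression at \<open>m = i - n\<close> (the expressions for \<open>m < -n\<close> are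
  trivially zero). Finally \<open>I_r b r = 0\<close> for all \<open>r \<le> N\<close> says exactly that the coefficients of
  \<open>\<epsilon>^0, \<dots>, \<epsilon>^N\<close> of every \<open>b i\<close> vanish.\<close>

lemma I_r_nth:
  "coeff (I_r c r) m $ i = (if m \<le> r then coeff (c i) (r - m) / fact m else 0)"
  by (simp add: I_r_def I_comp_def coeff_sum)

lemma I_r_sum: "I_r (\<lambda>i. \<Sum>k\<in>K. c k i) r = (\<Sum>k\<in>K. I_r (c k) r)"
  by (intro poly_eqI fps_ext) (simp add: I_r_nth coeff_sum fps_sum_nth sum_divide_distrib)

lemma I_r_smult: "I_r (\<lambda>i. smult x (c i)) r = smult (fps_const x) (I_r c r)"
  by (intro poly_eqI fps_ext) (simp add: I_r_nth)

definition seq_shift :: "nat \<Rightarrow> (nat \<Rightarrow> 'a::zero) \<Rightarrow> nat \<Rightarrow> 'a" where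
  "seq_shift k c i = (if k \<le> i then c (i - k) else 0)"

lemma I_r_seq_shift: "I_r (seq_shift k c) r = smult (fps_X ^ k) (I_r c r)"
  by (intro poly_eqI fps_ext) (simp add: I_r_nth seq_shift_def fps_X_power_mult_nth)

lemma coeff_mult_linear:
  fixes p :: "'a::comm_ring_1 poly"
  shows "coeff (p * [:x, 1:]) s = x * coeff p s + (if s = 0 then 0 else coeff p (s - 1))"
proof -
  have "p * [:x, 1:] = smult x p + pCons 0 p"
    by (simp add: mult.commute[of p])
  then show ?thesis
    by (cases s) (simp_all add: algebra_simps)
qed

lemma Dop_nth:
  "coeff (Dop g) m $ i = of_nat i * coeff g m $ i + of_nat (Suc m) * coeff g (Suc m) $ i"
  by (cases i) (simp_all add: Dop_def coeff_map_poly coeff_pderiv fps_of_nat[symmetric])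

lemma Dop_I_r: "Dop (I_r c r) = I_r (\<lambda>i. c i * [:of_nat i, 1:]) r"
proof (intro poly_eqI fps_ext)
  fix m i
  have fact_Suc_div: "of_nat (Suc m) * x / fact (Suc m) = x / fact m" for x :: complex
    by (simp add: field_simps del: of_nat_Suc)
  show "coeff (Dop (I_r c r)) m $ i = coeff (I_r (\<lambda>i. c i * [:of_nat i, 1:]) r) m $ i"
    by (auto simp: Dop_nth I_r_nth coeff_mult_linear fact_Suc_div add_divide_distrib
        Suc_diff_Suc simp del: of_nat_Suc fact_Suc mult_pCons_right mult_pCons_left)
qed

lemma Dop_power_I_r: "(Dop ^^ j) (I_r c r) = I_r (\<lambda>i. c i * [:of_nat i, 1:] ^ j) r"
  by (induction j) (simp_all add: Dop_I_r mult.assoc power_commutes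
      del: mult_pCons_right mult_pCons_left)

lemma pcompose_eq_sum: "pcompose Q p = (\<Sum>j\<le>degree Q. smult (coeff Q j) (p ^ j))"
proof -
  have "degree (map_poly (\<lambda>x. [:x:]) Q) = degree Q"
    by (rule degree_map_poly) simp
  then show ?thesis
    unfolding pcompose_altdef poly_altdef by (simp add: coeff_map_poly)
qed

lemma poly_D_I_r: "poly_D Q (I_r c r) = I_r (\<lambda>i. c i * pcompose Q [:of_nat i, 1:]) r"
  by (simp add: poly_D_def pcompose_eq_sum sum_distrib_left mult_smult_right
      I_r_sum I_r_smult Dop_power_I_r)

text \<open>The coefficient of \<open>q\<^sup>i\<close> in \<open>P\<^sub>\<epsilon> (\<Sum>\<^sub>i c\<^sub>i q\<^sup>i)\<close>.\<close>
definition newton_coeff ::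
  "nat \<Rightarrow> (nat \<Rightarrow> complex poly) \<Rightarrow> (nat \<Rightarrow> complex poly) \<Rightarrow> nat \<Rightarrow> complex poly" where
  "newton_coeff n Pk c i = (\<Sum>k\<le>n. seq_shift k (\<lambda>j. c j * pcompose (Pk k) [:of_nat j, 1:]) i)"

lemma apply_P_I_r: "apply_P n Pk (I_r c r) = I_r (newton_coeff n Pk c) r"
  unfolding apply_P_def newton_coeff_def I_r_sum by (simp add: I_r_seq_shift poly_D_I_r)

lemma I_r_eq_0_iff: "I_r b r = 0 \<longleftrightarrow> (\<forall>s\<le>r. \<forall>i. coeff (b i) s = 0)"
proof
  assume "I_r b r = 0"
  moreover have "coeff (I_r b r) (r - s) $ i = coeff (b i) s / fact (r - s)" if "s \<le> r" for s i
    using that by (simp add: I_r_nth)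
  ultimately show "\<forall>s\<le>r. \<forall>i. coeff (b i) s = 0"
    by simp
next
  assume "\<forall>s\<le>r. \<forall>i. coeff (b i) s = 0"
  then show "I_r b r = 0"
    by (intro poly_eqI fps_ext) (simp add: I_r_nth)
qed

lemma perturbed_solution_iff:
  "perturbed_solution n Pk N c \<longleftrightarrow> (\<forall>i. zero_in_R N (newton_coeff n Pk c i))"
  unfolding perturbed_solution_def apply_P_I_r I_r_eq_0_iff zero_in_R_def
  by (meson order_refl order_trans)

lemma ext_seq_term_eq_seq_shift:
  "ext_seq c (int i - int k) * pcompose Q [:of_int (int i - int k), 1:]
     = seq_shift k (\<lambda>j. c j * pcompose Q [:of_nat j, 1:]) i"
proof (cases "k \<le> i")
  case True
  then have "int i - int k = int (i - k)"
    by simp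
  then show ?thesis
    using True by (simp add: ext_seq_def seq_shift_def del: of_nat_diff)
qed (simp add: ext_seq_def seq_shift_def)

lemma newton_sum_eq_newton_coeff:
  "(\<Sum>j\<le>n. ext_seq c (int i - int n + int j) * pcompose (Pk (n - j)) [:of_int (int i - int n + int j), 1:])
     = newton_coeff n Pk c i"
  unfolding newton_coeff_def ext_seq_term_eq_seq_shift[symmetric]
proof (rule sum.reindex_bij_witness[of _ "\<lambda>k. n - k" "\<lambda>j. n - j"])
  fix j assume "j \<in> {..n}"
  then have "int i - int n + int j = int i - int (n - j)"
    by auto
  then show "ext_seq c (int i - int (n - j)) * pcompose (Pk (n - j)) [:of_int (int i - int (n - j)), 1:]
      = ext_seq c (int i - int n + int j) * pcompose (Pk (n - j)) [:of_int (int i - int n + int j), 1:]"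
    by (simp only:)
qed auto

lemma newton_solution_iff:
  "newton_solution n Pk N c \<longleftrightarrow> (\<forall>i. zero_in_R N (newton_coeff n Pk c i))"
proof
  assume "newton_solution n Pk N c"
  then show "\<forall>i. zero_in_R N (newton_coeff n Pk c i)"
    unfolding newton_solution_def newton_sum_eq_newton_coeff[symmetric] by blast
next
  assume coeffs: "\<forall>i. zero_in_R N (newton_coeff n Pk c i)"
  show "newton_solution n Pk N c"
    unfolding newton_solution_def
  proof
    fix m :: int
    show "zero_in_R N (\<Sum>j\<le>n. ext_seq c (m + int j) * pcompose (Pk (n - j)) [:of_int (m + int j), 1:])"
    proof (cases "m + int n \<ge> 0")
      case True
      then obtain i where "m = int i - int n"
        by (metis add_diff_cancel_right' nonneg_int_cases)
      then show ?thesis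
        using coeffs by (simp only: newton_sum_eq_newton_coeff)
    next
      case False
      then have "ext_seq c (m + int j) = 0" if "j \<le> n" for j
        using that by (simp add: ext_seq_def)
      then show ?thesis
        by (simp add: zero_in_R_def)
    qed
  qed
qed

theorem proposition2p2p2:
  fixes n N :: nat and Pk :: "nat \<Rightarrow> complex poly" and c :: "nat \<Rightarrow> complex poly"
  shows "newton_solution n Pk N c \<longleftrightarrow> perturbed_solution n Pk N c"
  by (simp add: newton_solution_iff perturbed_solution_iff)

end
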